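(* Let $\lambda\in\{1,2\}$ and let $u,t,v,w$ be integers such that: $(u,t)$ satisfies $S_{\lambda,1}$ and $u\cdot(vw)=t^3+t^{\lambda}+1$ (so $u,t,vw$ are consecutive terms of $\langle u,t\rangle_{S_{\lambda,1}}=\langle t,vw\rangle_{S_{2,\lambda}}$); $(v,t)$ satisfies $S_{\lambda,1}$ (so $v,t,uw$ are consecutive terms of $\langle v,t\rangle_{S_{\lambda,1}}=\langle t,uw\rangle_{S_{2,\lambda}}$); $|t|$ is a prime; and $t\nmid (u-v)$. Then $(-w,t)$ satisfies $S_{\lambda,1}$, so $-w,t,-uv$ are, in that order, three consecutive terms of a third 4-chain $\langle -w,t\rangle_{S_{\lambda,1}}=\langle t,-uv\rangle_{S_{2,\lambda}}$.
   Context: For $\lambda_a,\lambda_b\in\{1,2\}$, a pair of integers $(x,y)$ satisfies the system $S_{\lambda_a,\lambda_b}$ if $x\mid y^3+y^{\lambda_a}+1$ and $y\mid x^3+x^{\lambda_b}+1$. For such a pair, $\langle x,y\rangle_{S_{\lambda_a,\lambda_b}}$ denotes the bi-infinite integer sequence $(u_n)$ with $u_0=x$, $u_1=y$ and $u_{n-1}u_{n+1}=u_n^3+u_n^{e_n}+1$ for all $n$, where $e_n$ has period 4 with $(e_0,e_1,e_2,e_3)=(\lambda_b,\lambda_a,3-\lambda_b,3-\lambda_a)$; sequences are identified up to shift and reversal of indices. "$u,t,s$, in that order, are three consecutive terms of $\langle u,t\rangle_{S_{\lambda_a,\lambda_b}}$" means $(u,t)$ satisfies $S_{\lambda_a,\lambda_b}$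 and $us=t^3+t^{\lambda_a}+1$. *)

theory Defs
  imports "HOL-Computational_Algebra.Primes"
begin

definition satisfies_S :: "nat \<Rightarrow> nat \<Rightarrow> int \<Rightarrow> int \<Rightarrow> bool" where
  "satisfies_S la lb x y \<longleftrightarrow> x dvd y ^ 3 + y ^ la + 1 \<and> y dvd x ^ 3 + x ^ lb + 1"

text \<open>u, t, s are, in that order, three consecutive terms of the sequence generated by (u,t)
  for S_{la,lb}: (u,t) satisfies S_{la,lb} and u*s = t^3 + t^la + 1.\<close>
definition consec3 :: "nat \<Rightarrow> nat \<Rightarrow> int \<Rightarrow> int \<Rightarrow> int \<Rightarrow> bool" where
  "consec3 la lb u t s \<longleftrightarrow> satisfies_S la lb u t \<and> u * s = t ^ 3 + t ^ la + 1"

end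

theory Submission
  imports Defs
begin

text \<open>Modulo the prime \<open>p = \<bar>t\<bar>\<close>, \<open>u\<close> and \<open>v\<close> are distinct roots of
  \<open>f x = x^3 + x + 1\<close>. By Vieta, the third root is \<open>-(u + v)\<close> and the product of the roots
  gives \<open>u v (u + v) \<equiv> 1\<close>. On the other hand \<open>u v w \<equiv> 1\<close>, because
  \<open>u v w = t^3 + t^\<lambda> + 1\<close>. Hence \<open>w \<equiv> u + v\<close>, so \<open>-w\<close> is a root of \<open>f\<close> modulo \<open>t\<close>,
  while \<open>-w\<close> divides \<open>t^3 + t^\<lambda> + 1 = (-w)(-uv)\<close>.\<close>

lemma depressed_cubic_diff:
  fixes a b u v :: "'a::comm_ring_1"
  shows "(u^3 + a*u + b) - (v^3 + a*v + b) = (u - v) * (u^2 + u*v + v^2 + a)"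
  by (simp add: algebra_simps power2_eq_square power3_eq_cube)

lemma depressed_cubic_third_root:
  fixes a b u v :: "'a::comm_ring_1"
  shows "(-(u+v))^3 + a*(-(u+v)) + b
    = 2*(v^3 + a*v + b) - (u^3 + a*u + b) - 3*v*(u^2 + u*v + v^2 + a)"
  by (simp add: algebra_simps power2_eq_square power3_eq_cube)

lemma depressed_cubic_root_product:
  fixes a b u v :: "'a::comm_ring_1"
  shows "u*v*(u+v) - b = v*(u^2 + u*v + v^2 + a) - (v^3 + a*v + b)"
  by (simp add: algebra_simps power2_eq_square power3_eq_cube)

lemma prime_dvd_depressed_cubic_quotient:
  fixes p a b u v :: int
  assumes "prime p" "p dvd u^3 + a*u + b" "p dvd v^3 + a*v + b" "\<not> p dvd u - v"
  shows "p dvd u^2 + u*v + v^2 + a"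
proof -
  have "p dvd (u - v) * (u^2 + u*v + v^2 + a)"
    using assms(2,3) by (metis depressed_cubic_diff dvd_diff)
  with assms(1,4) show ?thesis by (simp add: prime_dvd_mult_iff)
qed

lemma prime_dvd_depressed_cubic_third_root:
  fixes p a b u v :: int
  assumes "prime p" "p dvd u^3 + a*u + b" "p dvd v^3 + a*v + b" "\<not> p dvd u - v"
  shows "p dvd (-(u+v))^3 + a*(-(u+v)) + b"
    and "p dvd u*v*(u+v) - b"
proof -
  note e = prime_dvd_depressed_cubic_quotient[OF assms]
  show "p dvd (-(u+v))^3 + a*(-(u+v)) + b"
    unfolding depressed_cubic_third_root
    by (rule dvd_diff[OF dvd_diff[OF dvd_mult[OF assms(3)] assms(2)] dvd_mult[OF e]])
  show "p dvd u*v*(u+v) - b"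
    unfolding depressed_cubic_root_product[of u v b a] by (rule dvd_diff[OF dvd_mult[OF e] assms(3)])
qed

lemma prime_dvd_cancel_unit_product:
  fixes p b c s w :: int
  assumes "prime p" "\<not> p dvd b" "p dvd c*s - b" "p dvd c*w - b"
  shows "p dvd w - s"
proof -
  have "p dvd c * (w - s)"
    using dvd_diff[OF assms(4,3)] by (simp add: algebra_simps)
  moreover have "\<not> p dvd c"
  proof
    assume "p dvd c"
    then have "p dvd c*w - (c*w - b)"
      by (rule dvd_diff[OF dvd_mult2 assms(4)])
    then have "p dvd b"
      by simp
    with assms(2) show False ..
  qed
  ultimately show ?thesis
    using assms(1) by (simp add: prime_dvd_mult_iff)
qed

lemma dvd_depressed_cubic_cong:
  fixes p a b x y :: int
  assumes "p dvd x - y" "p dvd y^3 + a*y + b"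
  shows "p dvd x^3 + a*x + b"
proof -
  have "x^3 + a*x + b = (x - y) * (x^2 + x*y + y^2 + a) + (y^3 + a*y + b)"
    using depressed_cubic_diff[of x a b y] by (simp add: algebra_simps)
  with assms show ?thesis by (metis dvd_add dvd_mult2)
qed

theorem theorem12:
  fixes lam :: nat and u t v w :: int
  assumes "lam \<in> {1, 2}"
    and "satisfies_S lam 1 u t"
    and "u * (v * w) = t ^ 3 + t ^ lam + 1"
    and "satisfies_S lam 1 v t"
    and "prime \<bar>t\<bar>"
    and "\<not> t dvd (u - v)"
  shows "satisfies_S lam 1 (- w) t \<and> consec3 lam 1 (- w) t (- (u * v))"
proof -
  have fu: "\<bar>t\<bar> dvd u^3 + 1*u + 1" and fv: "\<bar>t\<bar> dvd v^3 + 1*v + 1"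
    using assms(2,4) by (simp_all add: satisfies_S_def)
  have distinct: "\<not> \<bar>t\<bar> dvd u - v"
    using assms(6) by simp
  note roots = prime_dvd_depressed_cubic_third_root[OF assms(5) fu fv distinct]
  have "u*v*w - 1 = t^3 + t^lam"
    using assms(3) by (simp add: algebra_simps)
  then have "\<bar>t\<bar> dvd u*v*w - 1"
    using assms(1) by auto
  moreover have "\<not> \<bar>t\<bar> dvd 1"
    using assms(5) by (simp add: prime_int_iff)
  ultimately have "\<bar>t\<bar> dvd w - (u+v)"
    using prime_dvd_cancel_unit_product[OF assms(5) _ roots(2)] by simp
  then have "\<bar>t\<bar> dvd -w - -(u+v)"
    by (metis dvd_minus_iff minus_diff_eq diff_minus_eq_add uminus_add_conv_diff)
  from dvd_depressed_cubic_cong[OF this roots(1)]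
  have "\<bar>t\<bar> dvd (-w)^3 + (-w)^1 + 1"
    by simp
  moreover have prod: "(-w) * (-(u*v)) = t^3 + t^lam + 1"
    using assms(3) by (simp add: algebra_simps)
  ultimately have "satisfies_S lam 1 (-w) t"
    by (simp add: satisfies_S_def) (metis dvd_triv_left)
  with prod show ?thesis
    by (simp add: consec3_def)
qed

end
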